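(* For every $\rho>0$ and every $\rho$-patch $\mathcal P$ of $V$, $$\nu(B_{\mathcal P})=\prod_p\Big(1-\frac{|\mathcal P_p|}{p^2}\Big).$$
   Context: Throughout, $p$ denotes a prime. $V=\{x\in\mathbb Z^2:\gcd(x_1,x_2)=1\}$. For $X\subset\mathbb Z^2$, $X_p$ is the image of $X$ in $\mathbb Z^2/p\mathbb Z^2$. Subsets of $\mathbb Z^2$ are identified with elements of $\{0,1\}^{\mathbb Z^2}$ (product topology), and $\mathbb X_V:=\overline{\{t+V:t\in\mathbb Z^2\}}$, which equals the set of $A\subset\mathbb Z^2$ with $|A_p|<p^2$ for all $p$. A $\rho$-patch of $V$ is a set $(V-t)\cap B_\rho(0)$, $t\in\mathbb Z^2$; the cylinder set $C_{\mathcal P}$ is $\{X\in\mathbb X_V: X\cap B_\rho(0)=\mathcal P\}$, and $B_{\mathcal P}:=\{X\in\mathbb X_V: \mathcal P\subset X\cap B_\rho(0)\}$. $\nu$ is the unique Borel probability measure on $\mathbb X_V$ with $\nu(C_{\mathcal P})$ equal to the natural density of $\{t\in\mathbb Z^2:(V-t)\cap B_\rho(0)=\mathcal P\}$; this density is known to equal $\sum_{\mathcal F\subset(\mathbb Z^2\cap B_\rho(0))\setminus\mathcal P}(-1)^{|\mathcal F|}\prod_p\big(1-|(\mathcal P\cup\mathcal F)_p|/p^2\big)$. *)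

theory Defs
  imports "HOL-Analysis.Analysis" "HOL-Probability.Probability"
begin

text \<open>Points of Z^2 are pairs of integers; subsets of Z^2 are identified with their
  indicator functions in the product space (int \<times> int) \<Rightarrow> bool (product topology,
  bool discrete).\<close>

definition Vis :: "(int \<times> int) set" where
  "Vis = {x. gcd (fst x) (snd x) = 1}"

definition transl :: "int \<times> int \<Rightarrow> (int \<times> int) set \<Rightarrow> (int \<times> int) set" where
  "transl t A = (\<lambda>x. (fst x + fst t, snd x + snd t)) ` A"

definition red :: "nat \<Rightarrow> (int \<times> int) set \<Rightarrow> (int \<times> int) set" where
  "red p A = (\<lambda>x. (fst x mod int p, snd x mod int p)) ` A"

definition ballZ :: "real \<Rightarrow> (int \<times> int) set" where
  "ballZ \<rho> = {x. (real_of_int (fst x))\<^sup>2 + (real_of_int (snd x))\<^sup>2 < \<rho>\<^sup>2}"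

definition XV :: "((int \<times> int) \<Rightarrow> bool) set" where
  "XV = closure ((\<lambda>t. (\<lambda>x. x \<in> transl t Vis)) ` UNIV)"

definition is_patch :: "real \<Rightarrow> (int \<times> int) set \<Rightarrow> bool" where
  "is_patch \<rho> P \<longleftrightarrow> (\<exists>t. P = transl (- fst t, - snd t) Vis \<inter> ballZ \<rho>)"

definition cyl :: "real \<Rightarrow> (int \<times> int) set \<Rightarrow> ((int \<times> int) \<Rightarrow> bool) set" where
  "cyl \<rho> P = {X \<in> XV. {x. X x} \<inter> ballZ \<rho> = P}"

definition Bset :: "real \<Rightarrow> (int \<times> int) set \<Rightarrow> ((int \<times> int) \<Rightarrow> bool) set" where
  "Bset \<rho> P = {X \<in> XV. P \<subseteq> {x. X x} \<inter> ballZ \<rho>}"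

definition euler_prod :: "(int \<times> int) set \<Rightarrow> real" where
  "euler_prod A = (\<Prod>p. if prime p then 1 - real (card (red p A)) / (real p)\<^sup>2 else 1)"

text \<open>The (known) value of the natural density of the rho-patch P\<close>
definition patch_density :: "real \<Rightarrow> (int \<times> int) set \<Rightarrow> real" where
  "patch_density \<rho> P =
     (\<Sum>F\<in>Pow (ballZ \<rho> - P). (-1) ^ card F * euler_prod (P \<union> F))"

definition is_nu :: "((int \<times> int) \<Rightarrow> bool) measure \<Rightarrow> bool" where
  "is_nu M \<longleftrightarrow> prob_space M \<and> space M = XV \<and> sets M = sets (restrict_space borel XV) \<and>
     (\<forall>\<rho> P. \<rho> > 0 \<longrightarrow> is_patch \<rho> P \<longrightarrow> measure M (cyl \<rho> P) = patch_density \<rho> P)"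

end

theory Submission
  imports Defs
begin

text \<open>For a finite window \<open>B\<close> and \<open>Q \<subseteq> B\<close>, let \<open>d(Q)\<close> be the inclusion--exclusion
  expression defining the density of the pattern \<open>Q\<close> in \<open>B\<close>. Truncating every Euler product
  at the primes \<open>p \<le> n\<close> turns \<open>d(Q)\<close> into the proportion of choices of one residue class
  mod \<open>p\<close> for each such \<open>p\<close> whose set of survivors meets \<open>B\<close> exactly in \<open>Q\<close>. Hence \<open>d(Q) \<ge> 0\<close>,
  and summing over all \<open>Q \<supseteq> P\<close> gives the Euler product of \<open>P\<close>; for \<open>P = {}\<close> the total
  is \<open>1\<close>. Since \<open>\<nu>(C_Q) = d(Q)\<close> for patches and \<open>C_Q = {}\<close> otherwise, \<open>\<nu>(C_Q) \<le> d(Q)\<close>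
  for all \<open>Q\<close>, and both sides have total mass \<open>1\<close>; so equality holds everywhere, and
  \<open>B_P\<close> is the disjoint union of the \<open>C_Q\<close> with \<open>Q \<supseteq> P\<close>.\<close>

lemma sum_Pow_minus_one_power:
  assumes "finite H"
  shows "(\<Sum>F\<in>Pow H. (-1::'a::ring_1) ^ card F) = of_bool (H = {})"
proof (cases "H = {}")
  case False
  then have "card {T. T \<subseteq> H \<and> {} \<subseteq> T \<and> even (card T)} = card {T. T \<subseteq> H \<and> {} \<subseteq> T \<and> odd (card T)}"
    using assms by (intro card_subsupersets_even_odd) auto
  then show ?thesis
    using False assms by (auto intro!: sum_alternating_cancels simp: Pow_def)
qed simp

lemma sum_Pow_minus_one_power_of_bool_subset:
  assumes "finite B" "Q \<subseteq> B"
  shows "(\<Sum>F\<in>Pow (B - Q). (-1::'a::ring_1) ^ card F * of_bool (Q \<union> F \<subseteq> G)) = of_bool (Q = B \<inter> G)"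
proof (cases "Q \<subseteq> G")
  case True
  have "(\<Sum>F\<in>Pow (B - Q). (-1::'a) ^ card F * of_bool (Q \<union> F \<subseteq> G))
      = (\<Sum>F\<in>Pow ((B - Q) \<inter> G). (-1) ^ card F)"
    using True assms by (intro sum.mono_neutral_cong_right) auto
  also have "\<dots> = of_bool ((B - Q) \<inter> G = {})"
    using assms by (intro sum_Pow_minus_one_power) auto
  finally show ?thesis
    using True assms by (auto simp: of_bool_eq_iff)
qed auto

lemma prod_of_bool_eq:
  "finite A \<Longrightarrow> (\<Prod>x\<in>A. of_bool (P x) :: 'a::comm_semiring_1) = of_bool (\<forall>x\<in>A. P x)"
  by (induction A rule: finite_induct) auto

definition euler_factor :: "(int \<times> int) set \<Rightarrow> nat \<Rightarrow> real" where
  "euler_factor A p = (if prime p then 1 - real (card (red p A)) / (real p)\<^sup>2 else 1)"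

definition partial_euler_prod :: "(int \<times> int) set \<Rightarrow> nat \<Rightarrow> real" where
  "partial_euler_prod A n = (\<Prod>p\<le>n. euler_factor A p)"

lemma convergent_prod_euler_factor:
  assumes "finite A"
  shows "convergent_prod (euler_factor A)"
proof -
  have bound: "norm (euler_factor A n - 1) \<le> real (card A) * inverse (real n ^ 2)" for n
  proof -
    have "norm (euler_factor A n - 1) \<le> real (card (red n A)) / (real n)\<^sup>2"
      by (simp add: euler_factor_def)
    also have "\<dots> \<le> real (card A) / (real n)\<^sup>2"
      unfolding red_def using assms by (intro divide_right_mono) (simp_all add: card_image_le)
    finally show ?thesis
      by (simp add: divide_inverse)
  qed
  have "summable (\<lambda>n. real (card A) * inverse (real n ^ 2))"
    by (intro summable_mult inverse_power_summable) simp
  then have "summable (\<lambda>n. norm (euler_factor A n - 1))"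
    by (rule summable_comparison_test') (use bound in simp)
  then show ?thesis
    by (intro abs_convergent_prod_imp_convergent_prod summable_imp_abs_convergent_prod)
qed

lemma partial_euler_prod_LIMSEQ:
  assumes "finite A"
  shows "partial_euler_prod A \<longlonglongrightarrow> euler_prod A"
proof -
  have "euler_prod A = prodinf (euler_factor A)"
    unfolding euler_prod_def euler_factor_def ..
  then show ?thesis
    unfolding partial_euler_prod_def by (simp add: convergent_prod_LIMSEQ convergent_prod_euler_factor assms)
qed

lemma euler_prod_empty: "euler_prod {} = 1"
proof -
  have "euler_factor {} = (\<lambda>_. 1)" by (auto simp: euler_factor_def red_def)
  then have "partial_euler_prod {} = (\<lambda>_. 1)"
    by (simp add: partial_euler_prod_def fun_eq_iff)
  then show ?thesis
    using partial_euler_prod_LIMSEQ[of "{}"] by (simp add: LIMSEQ_const_iff)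
qed

definition primes_upto :: "nat \<Rightarrow> nat set" where
  "primes_upto n = {p. prime p \<and> p \<le> n}"

definition residue_square :: "nat \<Rightarrow> (int \<times> int) set" where
  "residue_square p = {0..<int p} \<times> {0..<int p}"

definition sieve_weight :: "nat \<Rightarrow> real" where
  "sieve_weight n = (\<Prod>p\<in>primes_upto n. 1 / (real p)\<^sup>2)"

definition sieve_survivors :: "nat \<Rightarrow> (nat \<Rightarrow> int \<times> int) \<Rightarrow> (int \<times> int) set" where
  "sieve_survivors n f = {x. \<forall>p\<in>primes_upto n. (fst x mod int p, snd x mod int p) \<noteq> f p}"

lemma finite_primes_upto: "finite (primes_upto n)"
  unfolding primes_upto_def by auto

lemma finite_residue_square: "finite (residue_square p)"
  unfolding residue_square_def by auto

lemma euler_factor_eq_sum: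
  assumes "prime p" "finite A"
  shows "euler_factor A p = (\<Sum>r\<in>residue_square p. of_bool (r \<notin> red p A) / (real p)\<^sup>2)"
proof -
  have "p > 0" using assms prime_gt_0_nat by blast
  then have sub: "red p A \<subseteq> residue_square p"
    unfolding red_def residue_square_def by auto
  have card_sq: "card (residue_square p) = p\<^sup>2"
    unfolding residue_square_def by (simp add: card_cartesian_product power2_eq_square)
  have "residue_square p \<inter> {r. r \<notin> red p A} = residue_square p - red p A" by blast
  then have "(\<Sum>r\<in>residue_square p. of_bool (r \<notin> red p A) / (real p)\<^sup>2)
      = real (card (residue_square p - red p A)) / (real p)\<^sup>2"
    by (simp add: finite_residue_square sum_divide_distrib[symmetric])
  also have "real (card (residue_square p - red p A)) = (real p)\<^sup>2 - real (card (red p A))"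
    using card_Diff_subset[OF finite_subset[OF sub finite_residue_square] sub]
      card_mono[OF finite_residue_square sub] card_sq by (simp add: of_nat_diff)
  finally show ?thesis using assms \<open>p > 0\<close> by (simp add: euler_factor_def diff_divide_distrib)
qed

lemma partial_euler_prod_eq_sieve_sum:
  assumes "finite A"
  shows "partial_euler_prod A n
    = (\<Sum>f\<in>PiE (primes_upto n) residue_square. sieve_weight n * of_bool (A \<subseteq> sieve_survivors n f))"
proof -
  have "partial_euler_prod A n = (\<Prod>p\<in>primes_upto n. euler_factor A p)"
    unfolding partial_euler_prod_def primes_upto_def
    by (rule prod.mono_neutral_right) (auto simp: euler_factor_def)
  also have "\<dots> = (\<Prod>p\<in>primes_upto n. \<Sum>r\<in>residue_square p. of_bool (r \<notin> red p A) / (real p)\<^sup>2)"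
    using assms by (intro prod.cong refl euler_factor_eq_sum) (auto simp: primes_upto_def)
  also have "\<dots> = (\<Sum>f\<in>PiE (primes_upto n) residue_square.
                    \<Prod>p\<in>primes_upto n. of_bool (f p \<notin> red p A) / (real p)\<^sup>2)"
    by (rule prod_sum_PiE) (auto simp: finite_primes_upto finite_residue_square)
  also have "\<dots> = (\<Sum>f\<in>PiE (primes_upto n) residue_square. sieve_weight n * of_bool (A \<subseteq> sieve_survivors n f))"
  proof (rule sum.cong)
    fix f
    have survive: "(\<forall>p\<in>primes_upto n. f p \<notin> red p A) \<longleftrightarrow> A \<subseteq> sieve_survivors n f"
      unfolding sieve_survivors_def red_def by (fastforce simp: image_iff)
    have "(\<Prod>p\<in>primes_upto n. of_bool (f p \<notin> red p A) / (real p)\<^sup>2)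
        = (\<Prod>p\<in>primes_upto n. 1 / (real p)\<^sup>2 * of_bool (f p \<notin> red p A))"
      by simp
    also have "\<dots> = sieve_weight n * of_bool (\<forall>p\<in>primes_upto n. f p \<notin> red p A)"
      unfolding prod.distrib sieve_weight_def prod_of_bool_eq[OF finite_primes_upto] ..
    finally show "(\<Prod>p\<in>primes_upto n. of_bool (f p \<notin> red p A) / (real p)\<^sup>2)
        = sieve_weight n * of_bool (A \<subseteq> sieve_survivors n f)"
      by (simp only: survive)
  qed simp
  finally show ?thesis .
qed

definition partial_pattern_density :: "(int \<times> int) set \<Rightarrow> (int \<times> int) set \<Rightarrow> nat \<Rightarrow> real" where
  "partial_pattern_density B Q n = (\<Sum>F\<in>Pow (B - Q). (-1) ^ card F * partial_euler_prod (Q \<union> F) n)"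

definition pattern_density :: "(int \<times> int) set \<Rightarrow> (int \<times> int) set \<Rightarrow> real" where
  "pattern_density B Q = (\<Sum>F\<in>Pow (B - Q). (-1) ^ card F * euler_prod (Q \<union> F))"

lemma partial_pattern_density_eq_sieve_sum:
  assumes "finite B" "Q \<subseteq> B"
  shows "partial_pattern_density B Q n
    = (\<Sum>f\<in>PiE (primes_upto n) residue_square. sieve_weight n * of_bool (Q = B \<inter> sieve_survivors n f))"
proof -
  have "partial_pattern_density B Q n
      = (\<Sum>F\<in>Pow (B - Q). \<Sum>f\<in>PiE (primes_upto n) residue_square.
           (-1) ^ card F * (sieve_weight n * of_bool (Q \<union> F \<subseteq> sieve_survivors n f)))"
  proof -
    have "finite (Q \<union> F)" if "F \<in> Pow (B - Q)" for F
      using that assms by (meson PowD Diff_subset finite_Un finite_subset)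
    then show ?thesis
      unfolding partial_pattern_density_def
      by (intro sum.cong refl) (simp add: partial_euler_prod_eq_sieve_sum sum_distrib_left)
  qed
  also have "\<dots> = (\<Sum>f\<in>PiE (primes_upto n) residue_square. sieve_weight n *
      (\<Sum>F\<in>Pow (B - Q). (-1) ^ card F * of_bool (Q \<union> F \<subseteq> sieve_survivors n f)))"
    by (subst sum.swap) (simp add: sum_distrib_left mult.left_commute)
  finally show ?thesis
    by (simp only: sum_Pow_minus_one_power_of_bool_subset[OF assms])
qed

lemma partial_pattern_density_nonneg:
  "finite B \<Longrightarrow> Q \<subseteq> B \<Longrightarrow> partial_pattern_density B Q n \<ge> 0"
  by (simp add: partial_pattern_density_eq_sieve_sum sieve_weight_def sum_nonneg prod_nonneg)

lemma sum_partial_pattern_density_supersets: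
  assumes "finite B" "P \<subseteq> B"
  shows "(\<Sum>Q\<in>{Q\<in>Pow B. P \<subseteq> Q}. partial_pattern_density B Q n) = partial_euler_prod P n"
proof -
  let ?S = "{Q\<in>Pow B. P \<subseteq> Q}" and ?\<Omega> = "PiE (primes_upto n) residue_square"
  have "(\<Sum>Q\<in>?S. partial_pattern_density B Q n)
      = (\<Sum>Q\<in>?S. \<Sum>f\<in>?\<Omega>. sieve_weight n * of_bool (Q = B \<inter> sieve_survivors n f))"
    using assms(1) by (intro sum.cong refl) (auto simp: partial_pattern_density_eq_sieve_sum)
  also have "\<dots> = (\<Sum>f\<in>?\<Omega>. sieve_weight n * (\<Sum>Q\<in>?S. of_bool (Q = B \<inter> sieve_survivors n f)))"
    by (subst sum.swap) (simp add: sum_distrib_left)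
  also have "\<dots> = (\<Sum>f\<in>?\<Omega>. sieve_weight n * of_bool (P \<subseteq> sieve_survivors n f))"
    using assms unfolding of_bool_def by (subst sum.delta) auto
  also have "\<dots> = partial_euler_prod P n"
    using assms by (simp add: partial_euler_prod_eq_sieve_sum finite_subset)
  finally show ?thesis .
qed

lemma partial_pattern_density_LIMSEQ:
  assumes "finite B" "Q \<subseteq> B"
  shows "partial_pattern_density B Q \<longlonglongrightarrow> pattern_density B Q"
proof -
  have "finite (Q \<union> F)" if "F \<in> Pow (B - Q)" for F
    using that assms finite_subset by auto
  then show ?thesis
    unfolding partial_pattern_density_def[abs_def] pattern_density_def
    by (intro tendsto_sum tendsto_mult_left partial_euler_prod_LIMSEQ)
qed

lemma pattern_density_nonneg: "finite B \<Longrightarrow> Q \<subseteq> B \<Longrightarrow> pattern_density B Q \<ge> 0"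
  by (rule LIMSEQ_le_const[OF partial_pattern_density_LIMSEQ]) (auto intro: partial_pattern_density_nonneg)

lemma sum_pattern_density_supersets:
  assumes "finite B" "P \<subseteq> B"
  shows "(\<Sum>Q\<in>{Q\<in>Pow B. P \<subseteq> Q}. pattern_density B Q) = euler_prod P"
proof (rule LIMSEQ_unique)
  show "(\<lambda>n. \<Sum>Q\<in>{Q\<in>Pow B. P \<subseteq> Q}. partial_pattern_density B Q n)
      \<longlonglongrightarrow> (\<Sum>Q\<in>{Q\<in>Pow B. P \<subseteq> Q}. pattern_density B Q)"
    using assms by (intro tendsto_sum partial_pattern_density_LIMSEQ) auto
  show "(\<lambda>n. \<Sum>Q\<in>{Q\<in>Pow B. P \<subseteq> Q}. partial_pattern_density B Q n) \<longlonglongrightarrow> euler_prod P"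
    unfolding sum_partial_pattern_density_supersets[OF assms]
    using assms by (simp add: partial_euler_prod_LIMSEQ finite_subset)
qed

lemma finite_ballZ: "finite (ballZ \<rho>)"
proof -
  let ?k = "\<lceil>\<bar>\<rho>\<bar>\<rceil>"
  have bound: "\<bar>a\<bar> \<le> ?k" if "(real_of_int a)\<^sup>2 + (real_of_int b)\<^sup>2 < \<rho>\<^sup>2" for a b
  proof -
    have "\<bar>real_of_int a\<bar> < \<bar>\<rho>\<bar>"
      using that abs_le_square_iff[of \<rho> "real_of_int a"] zero_le_power2[of "real_of_int b"] by linarith
    then show ?thesis by linarith
  qed
  have "ballZ \<rho> \<subseteq> {-?k..?k} \<times> {-?k..?k}"
    unfolding ballZ_def using bound bound[of b a for a b] by (fastforce simp: add.commute abs_le_iff)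
  then show ?thesis by (rule finite_subset) auto
qed

lemma open_agree_on_finite:
  assumes "finite B"
  shows "open {Y :: 'a \<Rightarrow> 'b::discrete_topology. \<forall>x\<in>B. Y x = X x}"
proof -
  have "{Y. \<forall>x\<in>B. Y x = X x} = (\<Inter>x\<in>B. (\<lambda>Y. Y x) -` {X x})" by auto
  moreover have "open ((\<lambda>Y. Y x) -` {X x})" for x
    by (intro open_vimage discrete_topology_class.open_discrete continuous_on_product_coordinates)
  ultimately show ?thesis using assms by auto
qed

lemma XV_restrict_ballZ_is_patch:
  assumes "X \<in> XV"
  shows "is_patch \<rho> ({x. X x} \<inter> ballZ \<rho>)"
proof -
  let ?U = "{Y. \<forall>x\<in>ballZ \<rho>. Y x = X x}"
  have "open ?U" "X \<in> ?U"
    by (simp_all add: open_agree_on_finite finite_ballZ)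
  moreover have "?U \<inter> closure (range (\<lambda>t x. x \<in> transl t Vis)) \<noteq> {}"
    using \<open>X \<in> ?U\<close> assms unfolding XV_def by blast
  ultimately have "?U \<inter> range (\<lambda>t x. x \<in> transl t Vis) \<noteq> {}"
    by (simp add: open_Int_closure_eq_empty)
  then obtain t where "\<forall>x\<in>ballZ \<rho>. (x \<in> transl t Vis) = X x"
    by auto
  then show ?thesis
    unfolding is_patch_def by (intro exI[of _ "(- fst t, - snd t)"]) auto
qed

lemma cyl_in_sets:
  assumes "is_nu M"
  shows "cyl \<rho> Q \<in> sets M"
proof (cases "Q \<subseteq> ballZ \<rho>")
  case True
  then have "cyl \<rho> Q = XV \<inter> {Y. \<forall>x\<in>ballZ \<rho>. Y x = (x \<in> Q)}"
    unfolding cyl_def by auto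
  moreover have "open {Y. \<forall>x\<in>ballZ \<rho>. Y x = (x \<in> Q)}"
    using open_agree_on_finite[OF finite_ballZ, of \<rho> "\<lambda>x. x \<in> Q"] by simp
  ultimately show ?thesis
    using assms unfolding is_nu_def by (auto simp: sets_restrict_space)
next
  case False
  then have "cyl \<rho> Q = {}"
    unfolding cyl_def by auto
  then show ?thesis by simp
qed

lemma Bset_eq_Union_cyl:
  "Bset \<rho> P = (\<Union>Q\<in>{Q\<in>Pow (ballZ \<rho>). P \<subseteq> Q}. cyl \<rho> Q)"
  unfolding Bset_def cyl_def by auto

lemma measure_Union_cyl:
  assumes "is_nu M" "S \<subseteq> Pow (ballZ \<rho>)"
  shows "measure M (\<Union>Q\<in>S. cyl \<rho> Q) = (\<Sum>Q\<in>S. measure M (cyl \<rho> Q))"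
proof (rule measure_finite_Union)
  show "finite S"
    using assms(2) by (rule finite_subset) (simp add: finite_ballZ)
  show "disjoint_family_on (cyl \<rho>) S"
    unfolding disjoint_family_on_def cyl_def by auto
  interpret prob_space M
    using assms(1) unfolding is_nu_def by blast
  show "cyl \<rho> ` S \<subseteq> sets M"
    using cyl_in_sets[OF assms(1)] by auto
  show "emeasure M (cyl \<rho> Q) \<noteq> \<infinity>" for Q
    by simp
qed

lemma measure_cyl_eq_pattern_density:
  assumes "is_nu M" "\<rho> > 0" "Q \<subseteq> ballZ \<rho>"
  shows "measure M (cyl \<rho> Q) = pattern_density (ballZ \<rho>) Q"
proof (rule sum_mono_inv[where f = "\<lambda>R. measure M (cyl \<rho> R)" and g = "pattern_density (ballZ \<rho>)"])
  let ?B = "ballZ \<rho>"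
  interpret prob_space M
    using assms(1) unfolding is_nu_def by blast
  show "measure M (cyl \<rho> R) \<le> pattern_density ?B R" if "R \<in> Pow ?B" for R
  proof (cases "is_patch \<rho> R")
    case True
    then show ?thesis
      using assms(1,2) unfolding is_nu_def patch_density_def pattern_density_def by simp
  next
    case False
    then have "cyl \<rho> R = {}"
      using XV_restrict_ballZ_is_patch unfolding cyl_def by blast
    then show ?thesis
      using that finite_ballZ by (simp add: pattern_density_nonneg)
  qed
  have "(\<Sum>R\<in>Pow ?B. measure M (cyl \<rho> R)) = measure M (\<Union>R\<in>Pow ?B. cyl \<rho> R)"
    by (rule measure_Union_cyl[symmetric, OF assms(1)]) simp
  also have "(\<Union>R\<in>Pow ?B. cyl \<rho> R) = space M"
    using assms(1) Bset_eq_Union_cyl[of \<rho> "{}"] unfolding is_nu_def Bset_def by (simp add: Pow_def)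
  also have "measure M (space M) = 1"
    by (rule prob_space)
  also have "\<dots> = (\<Sum>R\<in>Pow ?B. pattern_density ?B R)"
    using sum_pattern_density_supersets[OF finite_ballZ, of "{}"] by (simp add: euler_prod_empty Pow_def)
  finally show "(\<Sum>R\<in>Pow ?B. measure M (cyl \<rho> R)) = (\<Sum>R\<in>Pow ?B. pattern_density ?B R)" .
qed (use assms finite_ballZ in auto)

theorem corollaryA1:
  fixes \<nu> :: "((int \<times> int) \<Rightarrow> bool) measure" and \<rho> :: real and P :: "(int \<times> int) set"
  assumes "is_nu \<nu>" and "\<rho> > 0" and "is_patch \<rho> P"
  shows "measure \<nu> (Bset \<rho> P) = euler_prod P"
proof -
  have P_sub: "P \<subseteq> ballZ \<rho>"
    using assms(3) unfolding is_patch_def by auto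
  have "measure \<nu> (Bset \<rho> P) = (\<Sum>Q\<in>{Q\<in>Pow (ballZ \<rho>). P \<subseteq> Q}. measure \<nu> (cyl \<rho> Q))"
    unfolding Bset_eq_Union_cyl using assms(1) by (rule measure_Union_cyl) auto
  also have "\<dots> = (\<Sum>Q\<in>{Q\<in>Pow (ballZ \<rho>). P \<subseteq> Q}. pattern_density (ballZ \<rho>) Q)"
    using assms(1,2) by (intro sum.cong refl measure_cyl_eq_pattern_density) auto
  also have "\<dots> = euler_prod P"
    using finite_ballZ P_sub by (rule sum_pattern_density_supersets)
  finally show ?thesis .
qed

end
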